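(* Let $\mathcal{G}=(\mathcal{V},\mathcal{E})$ be an undirected graph with $n$ nodes and $E$ edges, in which every node has at least one neighbor, with incidence matrix $A\in\mathbb{R}^{n\times E}$. For each node $i$ let $f_i:\mathbb{R}\to\mathbb{R}$ be $M_i$-smooth and $\mu_i$-strongly convex, let $F(\lambda)=\sum_{i=1}^n f_i^*(u_i^TA\lambda)$ for $\lambda\in\mathbb{R}^E$, and let $\lambda^*$ be a minimizer of $F$. Consider the Set-wise Uniform Coordinate Descent (SU-CD) iteration: at each iteration $k$, a node $i$ is sampled uniformly at random from $\{1,\dots,n\}$, then an edge $\ell$ is sampled uniformly at random from $\mathcal{S}_i$, and one sets $\lambda^{k+1}=\lambda^k-\frac{1}{L}\nabla_\ell F(\lambda^k)e_\ell$. Then for every $k$, $$\mathbb{E}[F(\lambda^{k+1})\mid\lambda^k]-F(\lambda^* )\le\left(1-\frac{2\sigma_A}{L\,n\,N_{\max}}\right)\left[F(\lambda^k)-F(\lambda^* )\right].$$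
   Context: The incidence matrix $A$ has, in each column $\ell$ (edge $\ell\equiv(i,j)$), one entry $+1$ and one entry $-1$ in the rows of the endpoints $i,j$ (signs arbitrary), and zeros elsewhere. $u_i\in\mathbb{R}^n$ and $e_\ell\in\mathbb{R}^E$ are standard basis vectors; $f_i^*(y)=\sup_x(yx-f_i(x))$ is the Fenchel conjugate; $\nabla_\ell F(\lambda)=\partial F(\lambda)/\partial\lambda_\ell$. $\mathcal{S}_i$ is the set of edges incident to node $i$, $N_i=|\mathcal{S}_i|$, $N_{\max}=\max_iN_i$. $M_{\max}=\max_iM_i$, $\mu_{\min}=\min_i\mu_i$. Let $\gamma_{\max}$ be the largest eigenvalue and $\gamma^+_{\min}$ the smallest strictly positive eigenvalue of $A^TA$ (equivalently of the graph Laplacian $AA^T$). Then $L=\gamma_{\max}/\mu_{\min}$ (a smoothness constant of $F$) and $\sigma_A=\gamma^+_{\min}/M_{\max}$. The sampling at different iterations is independent. *)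

theory Defs
  imports "HOL-Analysis.Analysis" "HOL-Probability.Probability"
begin

text \<open>Incidence matrix of a graph whose edges (type 'e) have endpoints ends l = (a, b):
  +1 in row a, -1 in row b (orientation arbitrary), zero elsewhere.\<close>
definition incidence :: "('e \<Rightarrow> 'n \<times> 'n) \<Rightarrow> real^'e^'n" where
  "incidence ends = (\<chi> i l. if i = fst (ends l) then 1 else if i = snd (ends l) then -1 else 0)"

definition incident_edges :: "('e \<Rightarrow> 'n \<times> 'n) \<Rightarrow> 'n \<Rightarrow> 'e set" where
  "incident_edges ends i = {l. i = fst (ends l) \<or> i = snd (ends l)}"

definition smooth_with :: "real \<Rightarrow> (real \<Rightarrow> real) \<Rightarrow> bool" where
  "smooth_with M f \<longleftrightarrow> (\<forall>x. f differentiable (at x)) \<and>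
     (\<forall>x y. \<bar>deriv f x - deriv f y\<bar> \<le> M * \<bar>x - y\<bar>)"

definition strongly_convex :: "real \<Rightarrow> (real \<Rightarrow> real) \<Rightarrow> bool" where
  "strongly_convex mu f \<longleftrightarrow> convex_on UNIV (\<lambda>x. f x - mu / 2 * x\<^sup>2)"

definition fenchel_conj :: "(real \<Rightarrow> real) \<Rightarrow> real \<Rightarrow> real" where
  "fenchel_conj f y = (SUP x. y * x - f x)"

definition eigenvalues :: "real^'e^'e \<Rightarrow> real set" where
  "eigenvalues M = {g. \<exists>v. v \<noteq> 0 \<and> M *v v = g *\<^sub>R v}"

definition partial_deriv :: "(real^'e \<Rightarrow> real) \<Rightarrow> real^'e \<Rightarrow> 'e \<Rightarrow> real" where
  "partial_deriv F x l = deriv (\<lambda>t. F (x + t *\<^sub>R axis l 1)) 0"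

end

(* The conjugates f_i^* of the node functions are differentiable, with derivative (f_i')^-1,
   and exceed their tangent lines by at least (y' - y)^2/(2 M_i) and at most (y' - y)^2/(2 mu_i).
   Summing over the nodes squeezes F (x + d) - F x - <grad F x, d> between |A d|^2/(2 M_max)
   and |A d|^2/(2 mu_min).  Along a coordinate |A e_l|^2 = 2 <= gamma_max, so the step 1/L
   decreases F by at least (grad_l F x)^2/(2 L); averaging over the sampling, with
   N_i <= N_max and every edge counted at both endpoints, the expected decrease is at least
   |grad F x|^2/(L n N_max).  Since F depends on lambda only through A lambda, the lower bound
   applied to the component of lstar - x orthogonal to ker A, on which
   |A d|^2 >= gamma_min^+ |d|^2, gives the Polyak-Lojasiewicz inequality
   2 sigma_A (F x - F lstar) <= |grad F x|^2, and the two estimates combine to the contraction.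
   The spectral facts about A^T A come from extremizing |A x|^2 on the unit sphere of an
   invariant subspace. *)

theory Submission
  imports Defs
begin

section \<open>Smooth strongly convex functions and their conjugates\<close>

lemma strongly_convex_above_tangent:
  assumes "strongly_convex mu f" and "f differentiable (at x)"
  shows "f x + deriv f x * (z - x) + mu / 2 * (z - x)\<^sup>2 \<le> f z"
proof -
  have "((\<lambda>x. f x - mu / 2 * x\<^sup>2) has_field_derivative (deriv f x - mu * x)) (at x within UNIV)"
    using assms(2) by (auto intro!: derivative_eq_intros simp: DERIV_deriv_iff_real_differentiable)
  from convex_on_imp_above_tangent[OF assms(1)[unfolded strongly_convex_def] _ _ _ this, of z]
  show ?thesis by (simp add: power2_eq_square algebra_simps)
qed

lemma smooth_below_tangent:
  assumes "smooth_with M f"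
  shows "f z \<le> f x + deriv f x * (z - x) + M / 2 * (z - x)\<^sup>2"
proof -
  define q where "q t = f t - f x - deriv f x * (t - x) - M / 2 * (t - x)\<^sup>2" for t
  have lip: "\<bar>deriv f t - deriv f x\<bar> \<le> M * \<bar>t - x\<bar>" for t
    using assms unfolding smooth_with_def by blast
  have dq: "(q has_real_derivative (deriv f t - deriv f x - M * (t - x))) (at t)" for t
    using assms unfolding q_def smooth_with_def
    by (auto intro!: derivative_eq_intros simp: DERIV_deriv_iff_real_differentiable power2_eq_square algebra_simps)
  have "q z \<le> q x"
  proof (cases "x \<le> z")
    case True
    show ?thesis
    proof (rule DERIV_nonpos_imp_nonincreasing[of x z q, OF True])
      fix t assume "x \<le> t" "t \<le> z"
      then have "deriv f t - deriv f x - M * (t - x) \<le> 0"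
        using lip[of t] by (simp add: abs_le_iff)
      with dq show "\<exists>y. DERIV q t :> y \<and> y \<le> 0" by blast
    qed
  next
    case False
    show ?thesis
    proof (rule DERIV_nonneg_imp_nondecreasing[of z x q])
      fix t assume "z \<le> t" "t \<le> x"
      then have "0 \<le> deriv f t - deriv f x - M * (t - x)"
        using lip[of t] by (simp add: abs_le_iff right_diff_distrib)
      with dq show "\<exists>y. DERIV q t :> y \<and> y \<ge> 0" by blast
    qed (use False in simp)
  qed
  then show ?thesis by (simp add: q_def)
qed

lemma has_real_derivative_if_quadratic_remainder:
  fixes g :: "real \<Rightarrow> real"
  assumes "\<And>t. \<bar>g t - g 0 - t * D\<bar> \<le> C * t\<^sup>2"
  shows "(g has_real_derivative D) (at 0)"
proof -
  have "((\<lambda>t. (g t - g 0) / t - D) \<longlongrightarrow> 0) (at 0)"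
  proof (rule Lim_null_comparison)
    show "\<forall>\<^sub>F t in at 0. norm ((g t - g 0) / t - D) \<le> C * \<bar>t\<bar>"
    proof (rule eventually_at_filter[THEN iffD2, OF always_eventually], intro allI impI)
      fix t :: real assume "t \<noteq> 0"
      then have quotient: "(g t - g 0) / t - D = (g t - g 0 - t * D) / t"
        by (simp add: field_simps)
      have "\<bar>g t - g 0 - t * D\<bar> \<le> C * \<bar>t\<bar> * \<bar>t\<bar>"
        using assms[of t] by (simp add: power2_eq_square abs_mult_self_eq mult.assoc)
      then show "norm ((g t - g 0) / t - D) \<le> C * \<bar>t\<bar>"
        unfolding quotient using \<open>t \<noteq> 0\<close> by (simp add: abs_divide divide_le_eq)
    qed
  qed (auto intro!: tendsto_eq_intros)
  then show ?thesis
    by (simp add: has_field_derivative_iff LIM_zero_iff)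
qed

locale smooth_strongly_convex =
  fixes f :: "real \<Rightarrow> real" and M mu :: real
  assumes smooth: "smooth_with M f"
    and strongly_convex: "strongly_convex mu f"
    and mu_pos: "0 < mu"
begin

lemma above_tangent: "f x + deriv f x * (z - x) + mu / 2 * (z - x)\<^sup>2 \<le> f z"
  using strongly_convex_above_tangent[OF strongly_convex] smooth
  unfolding smooth_with_def by blast

lemma below_tangent: "f z \<le> f x + deriv f x * (z - x) + M / 2 * (z - x)\<^sup>2"
  by (rule smooth_below_tangent[OF smooth])

lemma deriv_strongly_monotone: "mu * (z - x)\<^sup>2 \<le> (deriv f z - deriv f x) * (z - x)"
  using above_tangent[of z x] above_tangent[of x z]
  by (simp add: power2_eq_square algebra_simps)

lemma M_pos: "0 < M"
proof -
  have "mu \<le> deriv f 1 - deriv f 0"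
    using deriv_strongly_monotone[of 1 0] by simp
  also have "\<dots> \<le> M"
    using smooth unfolding smooth_with_def by (metis abs_le_iff diff_zero mult_1_right abs_one)
  finally show ?thesis using mu_pos by simp
qed

lemma deriv_linear_growth:
  assumes "0 < t"
  shows "deriv f 0 + mu * t \<le> deriv f t" and "deriv f (- t) \<le> deriv f 0 - mu * t"
proof -
  have "mu * t * t \<le> (deriv f t - deriv f 0) * t"
    using deriv_strongly_monotone[of t 0] by (simp add: power2_eq_square mult.assoc)
  then show "deriv f 0 + mu * t \<le> deriv f t"
    using assms by (simp add: mult_le_cancel_right_pos)
  have "mu * t * t \<le> (deriv f 0 - deriv f (- t)) * t"
    using deriv_strongly_monotone[of 0 "- t"] by (simp add: power2_eq_square mult.assoc)
  then show "deriv f (- t) \<le> deriv f 0 - mu * t"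
    using assms by (simp add: mult_le_cancel_right_pos)
qed

lemma surj_deriv: "surj (deriv f)"
proof (rule surjI)
  fix y
  define T where "T = (\<bar>y\<bar> + \<bar>deriv f 0\<bar>) / mu + 1"
  have T: "0 < T" "mu * T = \<bar>y\<bar> + \<bar>deriv f 0\<bar> + mu"
    using mu_pos by (simp_all add: T_def field_simps add_pos_nonneg)
  have "continuous_on UNIV (deriv f)"
    using smooth M_pos unfolding smooth_with_def
    by (intro lipschitz_on_continuous_on[of M] lipschitz_onI) (auto simp: dist_real_def)
  moreover have "deriv f (- T) \<le> y" "y \<le> deriv f T"
    using deriv_linear_growth[OF T(1)] T(2) mu_pos by linarith+
  ultimately obtain x where "deriv f x = y"
    using IVT'[of "deriv f" "- T" y T] T(1) by (force intro: continuous_on_subset)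
  then show "deriv f (SOME x. deriv f x = y) = y" by (rule someI)
qed

lemma deriv_inv_deriv [simp]: "deriv f (inv (deriv f) y) = y"
  by (rule surj_f_inv_f[OF surj_deriv])

lemma fenchel_objective_le: "y * t - f t \<le> y * inv (deriv f) y - f (inv (deriv f) y)"
proof -
  have "0 \<le> mu / 2 * (t - inv (deriv f) y)\<^sup>2" using mu_pos by simp
  then show ?thesis
    using above_tangent[of "inv (deriv f) y" t] by (simp add: algebra_simps)
qed

lemma fenchel_conj_eq: "fenchel_conj f y = y * inv (deriv f) y - f (inv (deriv f) y)"
  unfolding fenchel_conj_def by (rule cSup_eq_maximum) (auto intro: fenchel_objective_le)

lemma fenchel_conj_upper:
  "fenchel_conj f y' \<le> fenchel_conj f y + inv (deriv f) y * (y' - y) + (y' - y)\<^sup>2 / (2 * mu)"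
proof -
  define x x' where "x = inv (deriv f) y" and "x' = inv (deriv f) y'"
  have "f x + y * (x' - x) + mu / 2 * (x' - x)\<^sup>2 \<le> f x'"
    using above_tangent[of x x'] by (simp add: x_def)
  moreover
  \<comment> \<open>AM-GM\<close>
  have "(y' - y) * (x' - x) - mu / 2 * (x' - x)\<^sup>2 \<le> (y' - y)\<^sup>2 / (2 * mu)"
  proof -
    have "0 \<le> ((y' - y) - mu * (x' - x))\<^sup>2 / (2 * mu)" using mu_pos by simp
    also have "\<dots> = (y' - y)\<^sup>2 / (2 * mu) - ((y' - y) * (x' - x) - mu / 2 * (x' - x)\<^sup>2)"
      using mu_pos by (simp add: field_simps power2_eq_square)
    finally show ?thesis by simp
  qed
  ultimately show ?thesis
    unfolding fenchel_conj_eq x_def[symmetric] x'_def[symmetric] by (simp add: algebra_simps)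
qed

lemma fenchel_conj_lower:
  "fenchel_conj f y + inv (deriv f) y * (y' - y) + (y' - y)\<^sup>2 / (2 * M) \<le> fenchel_conj f y'"
proof -
  define x d where "x = inv (deriv f) y" and "d = (y' - y) / M"
  have "y' * (x + d) - f (x + d) \<le> fenchel_conj f y'"
    unfolding fenchel_conj_eq by (rule fenchel_objective_le)
  moreover have "f (x + d) \<le> f x + y * d + M / 2 * d\<^sup>2"
    using below_tangent[of "x + d" x] by (simp add: x_def)
  moreover have "y' * (x + d) - (f x + y * d + M / 2 * d\<^sup>2)
      = (y * x - f x) + x * (y' - y) + (y' - y)\<^sup>2 / (2 * M)"
    using M_pos by (simp add: d_def field_simps power2_eq_square)
  ultimately show ?thesis
    unfolding fenchel_conj_eq x_def by linarith
qed

end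

section \<open>Extremal eigenvalues of Gram matrices\<close>

lemma inner_matrix_vector_transpose:
  fixes A :: "real^'e^'n"
  shows "(A *v x) \<bullet> y = x \<bullet> (transpose A *v y)"
  by (metis dot_lmul_matrix inner_commute transpose_matrix_vector)

lemma quadratic_nonneg_imp_linear_coeff_zero:
  fixes b c :: real
  assumes "\<And>t. 0 \<le> b * t + c * t\<^sup>2"
  shows "b = 0"
proof (rule ccontr)
  assume "b \<noteq> 0"
  define k where "k = \<bar>c\<bar> + 1"
  have k: "0 < k" by (simp add: k_def add_nonneg_pos)
  have "b * (- b / k) + \<bar>c\<bar> * (- b / k)\<^sup>2 = (b / k)\<^sup>2 * (\<bar>c\<bar> - k)"
    using k by (simp add: power2_eq_square field_simps)
  also have "\<dots> < 0"
    using k \<open>b \<noteq> 0\<close> by (simp add: k_def)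
  finally show False
    using assms[of "- b / k"] abs_ge_self[of c]
    by (smt (verit) mult_right_mono zero_le_power2)
qed

text \<open>A quadratic form that is semidefinite on an invariant subspace and vanishes at \<open>v\<close>
  is stationary at \<open>v\<close>, and its gradient there is \<open>2 (A\<^sup>T A v - m v)\<close>.\<close>

lemma gram_eigenvector_if_extremal:
  fixes A :: "real^'e^'n"
  assumes W: "subspace W" and invariant: "\<And>x. x \<in> W \<Longrightarrow> transpose A *v (A *v x) \<in> W"
    and s: "\<bar>s\<bar> = 1"
    and semidef: "\<And>x. x \<in> W \<Longrightarrow> 0 \<le> s * ((norm (A *v x))\<^sup>2 - m * (norm x)\<^sup>2)"
    and v: "v \<in> W" and zero: "(norm (A *v v))\<^sup>2 = m * (norm v)\<^sup>2"
  shows "(transpose A ** A) *v v = m *\<^sub>R v"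
proof -
  define Q where "Q x = (norm (A *v x))\<^sup>2 - m * (norm x)\<^sup>2" for x
  define w where "w = transpose A *v (A *v v) - m *\<^sub>R v"
  have w: "w \<in> W"
    using W invariant v by (simp add: w_def subspace_diff subspace_scale)
  have cross: "(A *v v) \<bullet> (A *v w) - m * (v \<bullet> w) = w \<bullet> w"
    using inner_matrix_vector_transpose[of "transpose A" "A *v v" w]
    by (simp add: w_def inner_diff_left)
  have "Q (v + t *\<^sub>R w) = Q v + 2 * t * ((A *v v) \<bullet> (A *v w) - m * (v \<bullet> w)) + t\<^sup>2 * Q w" for t
    unfolding Q_def power2_norm_eq_inner
    by (simp add: matrix_vector_right_distrib matrix_vector_mult_scaleR inner_add_left
        inner_add_right inner_commute power2_eq_square algebra_simps)
  then have expand: "Q (v + t *\<^sub>R w) = 2 * t * (w \<bullet> w) + t\<^sup>2 * Q w" for t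
    using zero cross by (simp add: Q_def)
  have "0 \<le> s * Q (v + t *\<^sub>R w)" for t
    using semidef[of "v + t *\<^sub>R w"] W v w by (simp add: Q_def subspace_add subspace_scale)
  moreover have "s * Q (v + t *\<^sub>R w) = (2 * s * (w \<bullet> w)) * t + (s * Q w) * t\<^sup>2" for t
    unfolding expand by (simp add: algebra_simps)
  ultimately have "0 \<le> (2 * s * (w \<bullet> w)) * t + (s * Q w) * t\<^sup>2" for t
    by metis
  then have "2 * s * (w \<bullet> w) = 0"
    by (rule quadratic_nonneg_imp_linear_coeff_zero)
  then have "w = 0" using s by auto
  then show ?thesis by (simp add: w_def matrix_vector_mul_assoc)
qed

lemma finite_eigenvalues_symmetric:
  fixes S :: "real^'e^'e"
  assumes "transpose S = S"
  shows "finite (eigenvalues S)"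
proof -
  define ev where "ev g = (SOME v. v \<noteq> 0 \<and> S *v v = g *\<^sub>R v)" for g
  have ev: "ev g \<noteq> 0 \<and> S *v ev g = g *\<^sub>R ev g" if "g \<in> eigenvalues S" for g
  proof -
    from that obtain v where "v \<noteq> 0 \<and> S *v v = g *\<^sub>R v"
      unfolding eigenvalues_def by blast
    then show ?thesis unfolding ev_def by (rule someI)
  qed
  have orthogonal: "ev g \<bullet> ev h = 0"
    if "g \<in> eigenvalues S" "h \<in> eigenvalues S" "g \<noteq> h" for g h
  proof -
    have "g * (ev g \<bullet> ev h) = (S *v ev g) \<bullet> ev h"
      using ev[OF that(1)] by simp
    also have "\<dots> = ev g \<bullet> (S *v ev h)"
      using inner_matrix_vector_transpose[of S "ev g" "ev h"] assms by simp
    also have "\<dots> = h * (ev g \<bullet> ev h)"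
      using ev[OF that(2)] by simp
    finally have "(g - h) * (ev g \<bullet> ev h) = 0"
      by (simp add: left_diff_distrib)
    then show ?thesis using that(3) by simp
  qed
  have "inj_on ev (eigenvalues S)"
  proof (rule inj_onI, rule ccontr)
    fix g h assume "g \<in> eigenvalues S" "h \<in> eigenvalues S" "ev g = ev h" "g \<noteq> h"
    then show False using orthogonal[of g h] ev[of g] by simp
  qed
  moreover have "independent (ev ` eigenvalues S)"
  proof (rule pairwise_orthogonal_independent)
    show "pairwise orthogonal (ev ` eigenvalues S)"
      using orthogonal by (fastforce simp: pairwise_def orthogonal_def)
    show "0 \<notin> ev ` eigenvalues S"
      using ev by fastforce
  qed
  ultimately show ?thesis
    using independent_bound finite_imageD by blast
qed

lemma finite_eigenvalues_gram: "finite (eigenvalues (transpose A ** A))"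
  by (rule finite_eigenvalues_symmetric) (simp add: matrix_transpose_mul)

lemma norm_matrix_vector_sgn:
  fixes A :: "real^'e^'n"
  shows "(norm (A *v x))\<^sup>2 = (norm x)\<^sup>2 * (norm (A *v sgn x))\<^sup>2"
proof (cases "x = 0")
  case False
  then have "A *v x = norm x *\<^sub>R (A *v sgn x)"
    by (simp add: sgn_div_norm matrix_vector_mult_scaleR)
  then show ?thesis by (simp add: power_mult_distrib)
qed simp

lemma gram_top_eigenvalue:
  fixes A :: "real^'e^'n"
  obtains R where "R \<in> eigenvalues (transpose A ** A)" "\<And>x. (norm (A *v x))\<^sup>2 \<le> R * (norm x)\<^sup>2"
proof -
  have "continuous_on (sphere 0 1) (\<lambda>x. (norm (A *v x))\<^sup>2)"
    by (intro continuous_intros linear_continuous_on matrix_vector_mul_linear)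
  moreover have "axis undefined 1 \<in> sphere (0::real^'e) 1" by simp
  ultimately obtain v where v: "v \<in> sphere 0 1"
    and max: "\<And>y. y \<in> sphere 0 1 \<Longrightarrow> (norm (A *v y))\<^sup>2 \<le> (norm (A *v v))\<^sup>2"
    using continuous_attains_sup[OF compact_sphere] by (metis empty_iff)
  define R where "R = (norm (A *v v))\<^sup>2"
  have bound: "(norm (A *v x))\<^sup>2 \<le> R * (norm x)\<^sup>2" for x
  proof (cases "x = 0")
    case False
    then have "(norm (A *v sgn x))\<^sup>2 \<le> R" using max[of "sgn x"] by (simp add: R_def norm_sgn)
    then have "(norm (A *v sgn x))\<^sup>2 * (norm x)\<^sup>2 \<le> R * (norm x)\<^sup>2"
      by (rule mult_right_mono) simp
    then show ?thesis by (simp add: norm_matrix_vector_sgn[of A x] mult.commute)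
  qed simp
  have "(transpose A ** A) *v v = R *\<^sub>R v"
    by (rule gram_eigenvector_if_extremal[where W = UNIV and s = "-1"])
      (use bound v in \<open>auto simp: R_def\<close>)
  with v have "R \<in> eigenvalues (transpose A ** A)"
    unfolding eigenvalues_def by (auto intro!: exI[of _ v])
  then show thesis using bound by (rule that)
qed

lemma norm_matrix_vector_le_Max_eigenvalue:
  fixes A :: "real^'e^'n"
  shows "(norm (A *v x))\<^sup>2 \<le> Max (eigenvalues (transpose A ** A)) * (norm x)\<^sup>2"
proof -
  obtain R where R: "R \<in> eigenvalues (transpose A ** A)" "(norm (A *v x))\<^sup>2 \<le> R * (norm x)\<^sup>2"
    using gram_top_eigenvalue by metis
  have "R \<le> Max (eigenvalues (transpose A ** A))"
    using R(1) finite_eigenvalues_gram by (rule Max_ge[rotated])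
  with R(2) show ?thesis by (smt (verit) mult_right_mono zero_le_power2)
qed

lemma Min_pos_eigenvalue_gram_pos:
  fixes A :: "real^'e^'n"
  assumes "A *v x \<noteq> 0"
  shows "0 < Min {g \<in> eigenvalues (transpose A ** A). 0 < g}"
proof -
  obtain R where R: "R \<in> eigenvalues (transpose A ** A)" "(norm (A *v x))\<^sup>2 \<le> R * (norm x)\<^sup>2"
    using gram_top_eigenvalue by metis
  have "0 < R * (norm x)\<^sup>2" using R(2) assms by (smt (verit) zero_less_norm_iff zero_less_power)
  then have "0 < R" by (simp add: zero_less_mult_iff)
  with R(1) have "Min {g \<in> eigenvalues (transpose A ** A). 0 < g} \<in> {g. 0 < g}"
    using finite_eigenvalues_gram[of A] by (intro subsetD[OF _ Min_in]) auto
  then show ?thesis by simp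
qed

lemma Min_pos_eigenvalue_le_gram:
  fixes A :: "real^'e^'n"
  assumes d: "\<And>z. A *v z = 0 \<Longrightarrow> d \<bullet> z = 0"
  shows "Min {g \<in> eigenvalues (transpose A ** A). 0 < g} * (norm d)\<^sup>2 \<le> (norm (A *v d))\<^sup>2"
proof (cases "d = 0")
  case False
  define W where "W = {x. \<forall>z. A *v z = 0 \<longrightarrow> x \<bullet> z = 0}"
  have W: "subspace W"
    unfolding W_def subspace_def by (auto simp: inner_add_left)
  have invariant: "transpose A *v (A *v x) \<in> W" for x
    unfolding W_def
  proof (intro CollectI allI impI)
    fix z assume "A *v z = 0"
    then show "(transpose A *v (A *v x)) \<bullet> z = 0"
      using inner_matrix_vector_transpose[of A z "A *v x"] by (simp add: inner_commute)
  qed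
  have "continuous_on (sphere 0 1 \<inter> W) (\<lambda>x. (norm (A *v x))\<^sup>2)"
    by (intro continuous_intros linear_continuous_on matrix_vector_mul_linear)
  moreover have "compact (sphere 0 1 \<inter> W)"
    using W by (simp add: closed_subspace compact_Int_closed)
  moreover have "sgn d \<in> sphere 0 1 \<inter> W"
    using False d W by (simp add: W_def sgn_div_norm subspace_scale norm_sgn)
  ultimately obtain u where u: "u \<in> sphere 0 1 \<inter> W"
    and min: "\<And>y. y \<in> sphere 0 1 \<inter> W \<Longrightarrow> (norm (A *v u))\<^sup>2 \<le> (norm (A *v y))\<^sup>2"
    using continuous_attains_inf by (metis empty_iff)
  define m where "m = (norm (A *v u))\<^sup>2"
  have bound: "m * (norm x)\<^sup>2 \<le> (norm (A *v x))\<^sup>2" if "x \<in> W" for x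
  proof (cases "x = 0")
    case False
    then have "m \<le> (norm (A *v sgn x))\<^sup>2"
      using min[of "sgn x"] that W by (simp add: m_def norm_sgn sgn_div_norm subspace_scale)
    then have "m * (norm x)\<^sup>2 \<le> (norm (A *v sgn x))\<^sup>2 * (norm x)\<^sup>2"
      by (rule mult_right_mono) simp
    then show ?thesis by (simp add: norm_matrix_vector_sgn[of A x] mult.commute)
  qed simp
  have "(transpose A ** A) *v u = m *\<^sub>R u"
    by (rule gram_eigenvector_if_extremal[where W = W and s = 1])
      (use bound W invariant u in \<open>auto simp: m_def\<close>)
  moreover have "0 < m"
  proof -
    have "A *v u \<noteq> 0" using u by (auto simp: W_def)
    then show ?thesis by (simp add: m_def)
  qed
  ultimately have "m \<in> {g \<in> eigenvalues (transpose A ** A). 0 < g}"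
    using u unfolding eigenvalues_def by (auto intro!: exI[of _ u])
  then have "Min {g \<in> eigenvalues (transpose A ** A). 0 < g} \<le> m"
    using finite_eigenvalues_gram[of A] by (intro Min_le) auto
  then show ?thesis
    using bound[of d] d by (smt (verit) W_def mem_Collect_eq mult_right_mono zero_le_power2)
qed simp

section \<open>Separable functions of A x, incidence matrices and edge sampling\<close>

lemma sum_comp_matrix_le_quadratic:
  fixes A :: "real^'e^'n" and h p :: "'n \<Rightarrow> real \<Rightarrow> real"
  assumes "\<And>i y y'. h i y' \<le> h i y + p i y * (y' - y) + c * (y' - y)\<^sup>2"
  shows "(\<Sum>i\<in>UNIV. h i ((A *v (x + d)) $ i))
    \<le> (\<Sum>i\<in>UNIV. h i ((A *v x) $ i)) + (\<chi> i. p i ((A *v x) $ i)) \<bullet> (A *v d)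
      + c * (norm (A *v d))\<^sup>2"
proof -
  have "(\<Sum>i\<in>UNIV. h i ((A *v (x + d)) $ i))
      \<le> (\<Sum>i\<in>UNIV. h i ((A *v x) $ i) + p i ((A *v x) $ i) * (A *v d) $ i + c * ((A *v d) $ i)\<^sup>2)"
  proof (rule sum_mono)
    fix i
    show "h i ((A *v (x + d)) $ i)
        \<le> h i ((A *v x) $ i) + p i ((A *v x) $ i) * (A *v d) $ i + c * ((A *v d) $ i)\<^sup>2"
      using assms[where i = i and y = "(A *v x) $ i" and y' = "(A *v x) $ i + (A *v d) $ i"]
      by (simp add: matrix_vector_right_distrib)
  qed
  also have "\<dots> = (\<Sum>i\<in>UNIV. h i ((A *v x) $ i)) + (\<chi> i. p i ((A *v x) $ i)) \<bullet> (A *v d)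
      + c * (norm (A *v d))\<^sup>2"
    unfolding power2_norm_eq_inner
    by (simp add: sum.distrib sum_distrib_left inner_vec_def power2_eq_square)
  finally show ?thesis .
qed

lemma sum_comp_matrix_ge_quadratic:
  fixes A :: "real^'e^'n" and h p :: "'n \<Rightarrow> real \<Rightarrow> real"
  assumes "\<And>i y y'. h i y + p i y * (y' - y) + c * (y' - y)\<^sup>2 \<le> h i y'"
  shows "(\<Sum>i\<in>UNIV. h i ((A *v x) $ i)) + (\<chi> i. p i ((A *v x) $ i)) \<bullet> (A *v d)
      + c * (norm (A *v d))\<^sup>2
    \<le> (\<Sum>i\<in>UNIV. h i ((A *v (x + d)) $ i))"
proof -
  have "- h i y' \<le> - h i y + - p i y * (y' - y) + - c * (y' - y)\<^sup>2" for i y y'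
    using assms[where i = i and y = y and y' = y'] by simp
  from sum_comp_matrix_le_quadratic[of "\<lambda>i y. - h i y" "\<lambda>i y. - p i y" "- c", OF this,
      where A = A and x = x and d = d]
  show ?thesis by (simp add: sum_negf inner_vec_def)
qed

lemma incidence_mult_axis:
  assumes "fst (ends l) \<noteq> snd (ends l)"
  shows "incidence ends *v axis l 1 = axis (fst (ends l)) 1 - axis (snd (ends l)) 1"
  unfolding matrix_vector_mult_basis
  using assms by (auto simp: vec_eq_iff column_def incidence_def axis_def)

lemma norm_incidence_mult_axis:
  assumes "fst (ends l) \<noteq> snd (ends l)"
  shows "(norm (incidence ends *v axis l 1))\<^sup>2 = 2"
  using assms by (simp add: incidence_mult_axis power2_norm_eq_inner inner_diff_left
      inner_diff_right inner_axis_axis)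

lemma sum_incident_edges:
  fixes ends :: "'e::finite \<Rightarrow> 'n::finite \<times> 'n" and g :: "'e \<Rightarrow> 'a::comm_semiring_1"
  assumes "\<And>l. fst (ends l) \<noteq> snd (ends l)"
  shows "(\<Sum>i\<in>UNIV. \<Sum>l\<in>incident_edges ends i. g l) = 2 * (\<Sum>l\<in>UNIV. g l)"
proof -
  let ?at = "\<lambda>i j l. if i = j then g l else 0"
  have "(\<Sum>l\<in>incident_edges ends i. g l)
      = (\<Sum>l\<in>UNIV. ?at i (fst (ends l)) l + ?at i (snd (ends l)) l)" for i
  proof -
    have "(\<Sum>l\<in>incident_edges ends i. g l)
        = (\<Sum>l\<in>UNIV. if i = fst (ends l) \<or> i = snd (ends l) then g l else 0)"
      unfolding incident_edges_def by (simp add: sum.inter_filter[symmetric])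
    also have "\<dots> = (\<Sum>l\<in>UNIV. ?at i (fst (ends l)) l + ?at i (snd (ends l)) l)"
      using assms by (intro sum.cong) (auto, metis)
    finally show ?thesis .
  qed
  then have "(\<Sum>i\<in>UNIV. \<Sum>l\<in>incident_edges ends i. g l)
      = (\<Sum>l\<in>UNIV. \<Sum>i\<in>UNIV. ?at i (fst (ends l)) l + ?at i (snd (ends l)) l)"
    using sum.swap by simp
  also have "\<dots> = 2 * (\<Sum>l\<in>UNIV. g l)"
    by (simp add: sum.distrib mult_2 sum_distrib_left)
  finally show ?thesis .
qed

lemma kernel_orthogonal_representative:
  fixes A :: "real^'e^'n"
  obtains z where "A *v z = A *v v" and "\<And>w. A *v w = 0 \<Longrightarrow> z \<bullet> w = 0"
proof -
  define K where "K = {w. A *v w = 0}"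
  have K: "subspace K"
    by (auto simp: K_def subspace_def matrix_vector_right_distrib matrix_vector_mult_scaleR)
  obtain p z where p: "p \<in> span K" and z: "\<And>w. w \<in> span K \<Longrightarrow> orthogonal z w"
    and decomp: "v = p + z"
    using orthogonal_subspace_decomp_exists by metis
  have "p \<in> K"
    using p unfolding span_eq_iff[THEN iffD2, OF K] .
  then have "A *v z = A *v v"
    by (simp add: K_def decomp matrix_vector_right_distrib)
  moreover have "z \<bullet> w = 0" if "A *v w = 0" for w
    using z[of w] that by (simp add: K_def orthogonal_def span_base)
  ultimately show thesis by (rule that)
qed

lemma expectation_node_edge_sampling:
  fixes ends :: "'e::finite \<Rightarrow> 'n::finite \<times> 'n" and g :: "'e \<Rightarrow> real"
  assumes "\<And>i. incident_edges ends i \<noteq> {}"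
  shows "measure_pmf.expectation
      (bind_pmf (pmf_of_set (UNIV :: 'n set)) (\<lambda>i. pmf_of_set (incident_edges ends i))) g
    = (\<Sum>i\<in>UNIV. (\<Sum>l\<in>incident_edges ends i. g l) / card (incident_edges ends i)) / CARD('n)"
proof -
  have "measure_pmf.expectation
      (bind_pmf (pmf_of_set (UNIV :: 'n set)) (\<lambda>i. pmf_of_set (incident_edges ends i))) g
    = (\<Sum>i\<in>UNIV. measure_pmf.expectation (pmf_of_set (incident_edges ends i)) g /\<^sub>R CARD('n))"
    by (rule pmf_expectation_bind_pmf_of_set) (use assms in auto)
  also have "\<dots> = (\<Sum>i\<in>UNIV. (\<Sum>l\<in>incident_edges ends i. g l) / card (incident_edges ends i) / CARD('n))"
    using assms by (simp add: integral_pmf_of_set divide_inverse_commute)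
  finally show ?thesis by (simp add: sum_divide_distrib)
qed

section \<open>Coordinate descent on the dual problem\<close>

locale graph_dual_problem =
  fixes ends :: "'e::finite \<Rightarrow> 'n::finite \<times> 'n"
    and f :: "'n \<Rightarrow> real \<Rightarrow> real"
    and M mu :: "'n \<Rightarrow> real"
    and F :: "real^'e \<Rightarrow> real"
  assumes no_loops: "\<And>l. fst (ends l) \<noteq> snd (ends l)"
    and has_nbr: "\<And>i. incident_edges ends i \<noteq> {}"
    and smooth_strongly_convex_f: "\<And>i. smooth_strongly_convex (f i) (M i) (mu i)"
    and F_eq: "\<And>lam. F lam = (\<Sum>i\<in>UNIV. fenchel_conj (f i) ((incidence ends *v lam) $ i))"
begin

abbreviation A :: "real^'e^'n" where "A \<equiv> incidence ends"

definition mu_min :: real where "mu_min = Min (range mu)"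
definition M_max :: real where "M_max = Max (range M)"
definition gamma_max :: real where "gamma_max = Max (eigenvalues (transpose A ** A))"
definition gamma_min_pos :: real where
  "gamma_min_pos = Min {g \<in> eigenvalues (transpose A ** A). 0 < g}"
definition L :: real where "L = gamma_max / mu_min"
definition sigma_A :: real where "sigma_A = gamma_min_pos / M_max"
definition N_max :: nat where "N_max = Max (range (\<lambda>i. card (incident_edges ends i)))"

definition grad :: "real^'e \<Rightarrow> real^'e" where
  "grad x = transpose A *v (\<chi> i. inv (deriv (f i)) ((A *v x) $ i))"

lemma grad_inner: "grad x \<bullet> d = (\<chi> i. inv (deriv (f i)) ((A *v x) $ i)) \<bullet> (A *v d)"
  unfolding grad_def by (subst inner_matrix_vector_transpose) simp

lemma mu_min_le: "mu_min \<le> mu i"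
  unfolding mu_min_def by (rule Min_le) auto

lemma mu_min_pos: "0 < mu_min"
  using Min_in[of "range mu"] smooth_strongly_convex.mu_pos[OF smooth_strongly_convex_f]
  by (auto simp: mu_min_def)

lemma M_max_ge: "M i \<le> M_max"
  unfolding M_max_def by (rule Max_ge) auto

lemma M_max_pos: "0 < M_max"
  using smooth_strongly_convex.M_pos[OF smooth_strongly_convex_f] M_max_ge
  by (meson order_less_le_trans)

lemma norm_A_axis: "(norm (A *v axis l 1))\<^sup>2 = 2"
  using no_loops by (rule norm_incidence_mult_axis)

lemma gamma_max_ge_2: "2 \<le> gamma_max"
  using norm_matrix_vector_le_Max_eigenvalue[of A "axis undefined 1"]
  by (simp add: gamma_max_def norm_A_axis)

lemma L_pos: "0 < L"
  using gamma_max_ge_2 mu_min_pos by (simp add: L_def)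

lemma sigma_A_pos: "0 < sigma_A"
proof -
  have "A *v axis undefined 1 \<noteq> 0"
    using norm_A_axis[of undefined] by auto
  from Min_pos_eigenvalue_gram_pos[OF this] show ?thesis
    using M_max_pos by (simp add: sigma_A_def gamma_min_pos_def)
qed

lemma card_incident_edges_pos: "0 < card (incident_edges ends i)"
  using has_nbr by (simp add: card_gt_0_iff)

lemma card_incident_edges_le: "card (incident_edges ends i) \<le> N_max"
  unfolding N_max_def by (rule Max_ge) auto

lemma F_le: "F (x + d) \<le> F x + grad x \<bullet> d + (norm (A *v d))\<^sup>2 / (2 * mu_min)"
proof -
  have "fenchel_conj (f i) y'
      \<le> fenchel_conj (f i) y + inv (deriv (f i)) y * (y' - y) + 1 / (2 * mu_min) * (y' - y)\<^sup>2"
    for i y y'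
  proof -
    have "(y' - y)\<^sup>2 / (2 * mu i) \<le> (y' - y)\<^sup>2 / (2 * mu_min)"
      using mu_min_le[of i] mu_min_pos by (intro divide_left_mono) auto
    then show ?thesis
      using smooth_strongly_convex.fenchel_conj_upper[OF smooth_strongly_convex_f, of i y' y] by simp
  qed
  from sum_comp_matrix_le_quadratic[OF this] show ?thesis
    by (simp add: F_eq grad_inner)
qed

lemma F_ge: "F x + grad x \<bullet> d + (norm (A *v d))\<^sup>2 / (2 * M_max) \<le> F (x + d)"
proof -
  have "fenchel_conj (f i) y + inv (deriv (f i)) y * (y' - y) + 1 / (2 * M_max) * (y' - y)\<^sup>2
      \<le> fenchel_conj (f i) y'"
    for i y y'
  proof -
    have "(y' - y)\<^sup>2 / (2 * M_max) \<le> (y' - y)\<^sup>2 / (2 * M i)"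
      using M_max_ge[of i] smooth_strongly_convex.M_pos[OF smooth_strongly_convex_f, of i]
      by (intro divide_left_mono) auto
    then show ?thesis
      using smooth_strongly_convex.fenchel_conj_lower[OF smooth_strongly_convex_f, of i y y'] by simp
  qed
  from sum_comp_matrix_ge_quadratic[OF this] show ?thesis
    by (simp add: F_eq grad_inner)
qed

lemma F_axis_le: "F (x + t *\<^sub>R axis l 1) \<le> F x + t * grad x $ l + t\<^sup>2 / mu_min"
  using F_le[of x "t *\<^sub>R axis l 1"] norm_A_axis[of l]
  by (simp add: matrix_vector_mult_scaleR inner_axis power_mult_distrib)

lemma F_axis_ge: "F x + t * grad x $ l \<le> F (x + t *\<^sub>R axis l 1)"
proof -
  have "0 \<le> (norm (A *v (t *\<^sub>R axis l 1)))\<^sup>2 / (2 * M_max)"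
    using M_max_pos by simp
  then show ?thesis
    using F_ge[of x "t *\<^sub>R axis l 1"] by (simp add: inner_axis)
qed

lemma partial_deriv_F: "partial_deriv F x l = grad x $ l"
proof -
  have "((\<lambda>t. F (x + t *\<^sub>R axis l 1)) has_real_derivative grad x $ l) (at 0)"
  proof (rule has_real_derivative_if_quadratic_remainder[where C = "1 / mu_min"])
    show "\<bar>F (x + t *\<^sub>R axis l 1) - F (x + 0 *\<^sub>R axis l 1) - t * grad x $ l\<bar> \<le> 1 / mu_min * t\<^sup>2"
      for t
      using F_axis_le[of x t l] F_axis_ge[of x t l] by simp
  qed
  then show ?thesis
    unfolding partial_deriv_def by (rule DERIV_imp_deriv)
qed

definition coordinate_step :: "real^'e \<Rightarrow> 'e \<Rightarrow> real^'e" where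
  "coordinate_step x l = x - ((1 / L) * partial_deriv F x l) *\<^sub>R axis l 1"

lemma F_coordinate_step_le: "F (coordinate_step x l) \<le> F x - (grad x $ l)\<^sup>2 / (2 * L)"
proof -
  define g where "g = grad x $ l"
  have "F (coordinate_step x l) = F (x + (- g / L) *\<^sub>R axis l 1)"
    by (simp add: coordinate_step_def partial_deriv_F g_def)
  also have "\<dots> \<le> F x + (- g / L) * g + (- g / L)\<^sup>2 / mu_min"
    unfolding g_def by (rule F_axis_le)
  also have "(- g / L)\<^sup>2 / mu_min = g\<^sup>2 / (L * gamma_max)"
    using mu_min_pos gamma_max_ge_2 by (simp add: L_def power2_eq_square field_simps)
  also have "g\<^sup>2 / (L * gamma_max) \<le> g\<^sup>2 / (L * 2)"
    using L_pos gamma_max_ge_2 by (intro divide_left_mono mult_left_mono) auto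
  finally show ?thesis by (simp add: g_def power2_eq_square field_simps)
qed

lemma node_average_F_coordinate_step_le:
  "(\<Sum>l\<in>incident_edges ends i. F (coordinate_step x l)) / card (incident_edges ends i)
    \<le> F x - (\<Sum>l\<in>incident_edges ends i. (grad x $ l)\<^sup>2) / (2 * L * N_max)"
proof -
  define N where "N = real (card (incident_edges ends i))"
  define Q where "Q = (\<Sum>l\<in>incident_edges ends i. (grad x $ l)\<^sup>2)"
  have N: "0 < N" "N \<le> N_max"
    using card_incident_edges_pos card_incident_edges_le by (simp_all add: N_def)
  have "(\<Sum>l\<in>incident_edges ends i. F (coordinate_step x l))
      \<le> (\<Sum>l\<in>incident_edges ends i. F x - (grad x $ l)\<^sup>2 / (2 * L))"
    by (intro sum_mono F_coordinate_step_le)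
  also have "\<dots> = N * F x - Q / (2 * L)"
    by (simp add: N_def Q_def sum_subtractf sum_divide_distrib)
  finally have "(\<Sum>l\<in>incident_edges ends i. F (coordinate_step x l)) / N \<le> F x - Q / (2 * L * N)"
    using N(1) by (simp add: field_simps)
  moreover have "Q / (2 * L * N_max) \<le> Q / (2 * L * N)"
    using N L_pos by (intro divide_left_mono mult_left_mono) (auto simp: Q_def sum_nonneg)
  ultimately show ?thesis
    by (simp add: N_def Q_def)
qed

definition sampling :: "'e pmf" where
  "sampling = bind_pmf (pmf_of_set UNIV) (\<lambda>i. pmf_of_set (incident_edges ends i))"

lemma expectation_F_coordinate_step_le:
  "measure_pmf.expectation sampling (\<lambda>l. F (coordinate_step x l))
    \<le> F x - (norm (grad x))\<^sup>2 / (L * CARD('n) * N_max)"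
proof -
  define Q where "Q i = (\<Sum>l\<in>incident_edges ends i. (grad x $ l)\<^sup>2)" for i
  have "measure_pmf.expectation sampling (\<lambda>l. F (coordinate_step x l))
      \<le> (\<Sum>i\<in>UNIV. F x - Q i / (2 * L * N_max)) / CARD('n)"
    unfolding sampling_def expectation_node_edge_sampling[OF has_nbr] Q_def
    by (intro divide_right_mono sum_mono node_average_F_coordinate_step_le) auto
  also have "(\<Sum>i\<in>UNIV. Q i) = 2 * (norm (grad x))\<^sup>2"
    unfolding Q_def sum_incident_edges[OF no_loops] power2_norm_eq_inner
    by (simp add: inner_vec_def power2_eq_square)
  then have "(\<Sum>i\<in>UNIV. F x - Q i / (2 * L * N_max)) / CARD('n)
      = F x - (norm (grad x))\<^sup>2 / (L * CARD('n) * N_max)"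
    using L_pos by (simp add: sum_subtractf flip: sum_divide_distrib) (simp add: field_simps)
  finally show ?thesis .
qed

lemma gradient_dominance: "2 * sigma_A * (F x - F y) \<le> (norm (grad x))\<^sup>2"
proof -
  obtain z where Az: "A *v z = A *v (y - x)" and z: "\<And>w. A *v w = 0 \<Longrightarrow> z \<bullet> w = 0"
    using kernel_orthogonal_representative by metis
  have "gamma_min_pos * (norm z)\<^sup>2 \<le> (norm (A *v z))\<^sup>2"
    unfolding gamma_min_pos_def using z by (rule Min_pos_eigenvalue_le_gram)
  then have "sigma_A * (norm z)\<^sup>2 / 2 \<le> (norm (A *v z))\<^sup>2 / (2 * M_max)"
    using M_max_pos by (simp add: sigma_A_def field_simps)
  moreover have "grad x \<bullet> (y - x) = grad x \<bullet> z"
    using Az by (simp add: grad_inner)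
  moreover have "- (norm (grad x) * norm z) \<le> grad x \<bullet> z"
    using norm_cauchy_schwarz[of "- grad x" z] by simp
  ultimately have "F x - F y \<le> norm (grad x) * norm z - sigma_A * (norm z)\<^sup>2 / 2"
    using F_ge[of x "y - x"] Az by simp
  then have "2 * sigma_A * (F x - F y)
      \<le> 2 * sigma_A * (norm (grad x) * norm z - sigma_A * (norm z)\<^sup>2 / 2)"
    by (rule mult_left_mono) (use sigma_A_pos in auto)
  also have "\<dots> = (norm (grad x))\<^sup>2 - (norm (grad x) - sigma_A * norm z)\<^sup>2"
    by (simp add: power2_eq_square algebra_simps)
  also have "\<dots> \<le> (norm (grad x))\<^sup>2"
    by simp
  finally show ?thesis .
qed

lemma expectation_F_coordinate_step_contraction:
  "measure_pmf.expectation sampling (\<lambda>l. F (coordinate_step x l)) - F y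
    \<le> (1 - 2 * sigma_A / (L * CARD('n) * N_max)) * (F x - F y)"
proof -
  have "0 < L * CARD('n) * N_max"
    using L_pos card_incident_edges_pos card_incident_edges_le
    by (metis mult_pos_pos of_nat_0_less_iff order_less_le_trans zero_less_card_finite)
  then have "2 * sigma_A * (F x - F y) / (L * CARD('n) * N_max)
      \<le> (norm (grad x))\<^sup>2 / (L * CARD('n) * N_max)"
    using gradient_dominance by (intro divide_right_mono) auto
  then show ?thesis
    using expectation_F_coordinate_step_le[of x] by (simp add: algebra_simps)
qed

end

theorem theorem1:
  fixes ends :: "'e::finite \<Rightarrow> 'n::finite \<times> 'n"
    and f :: "'n \<Rightarrow> real \<Rightarrow> real"
    and M mu :: "'n \<Rightarrow> real"
    and F :: "real^'e \<Rightarrow> real"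
    and lstar :: "real^'e"
    and x :: "real^'e"
  assumes no_loops: "\<forall>l. fst (ends l) \<noteq> snd (ends l)"
    and simple: "\<forall>l l'. {fst (ends l), snd (ends l)} = {fst (ends l'), snd (ends l')} \<longrightarrow> l = l'"
    and has_nbr: "\<forall>i. incident_edges ends i \<noteq> {}"
    and mu_pos: "\<forall>i. mu i > 0"
    and smooth: "\<forall>i. smooth_with (M i) (f i)"
    and sconv: "\<forall>i. strongly_convex (mu i) (f i)"
    and F_def: "\<forall>lam. F lam = (\<Sum>i\<in>UNIV. fenchel_conj (f i) ((incidence ends *v lam) $ i))"
    and minimizer: "\<forall>lam. F lstar \<le> F lam"
  shows
    "let A = incidence ends;
         gmax = Max (eigenvalues (transpose A ** A));
         gminp = Min {g \<in> eigenvalues (transpose A ** A). g > 0};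
         L = gmax / Min (range mu);
         sigmaA = gminp / Max (range M);
         Nmax = Max (range (\<lambda>i. card (incident_edges ends i)));
         sampling = bind_pmf (pmf_of_set (UNIV :: 'n set)) (\<lambda>i. pmf_of_set (incident_edges ends i))
     in measure_pmf.expectation sampling
          (\<lambda>l. F (x - ((1 / L) * partial_deriv F x l) *\<^sub>R axis l 1)) - F lstar
        \<le> (1 - 2 * sigmaA / (L * real CARD('n) * real Nmax)) * (F x - F lstar)"
proof -
  interpret graph_dual_problem ends f M mu F
    by unfold_locales (use no_loops has_nbr mu_pos smooth sconv F_def in auto)
  show ?thesis
    using expectation_F_coordinate_step_contraction[of x lstar]
    unfolding Let_def sampling_def coordinate_step_def L_def sigma_A_def N_max_def gamma_max_def
      gamma_min_pos_def mu_min_def M_max_def by simp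
qed

end
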